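(* Let $R$ be a commutative ring and $\mathfrak{a}\subseteq R$ an ideal. If $\Gamma_\mathfrak{a}$ commutes with inductive limits (all small colimits), then $\Gamma_\mathfrak{a}$ is a radical and $R=\Gamma_\mathfrak{a}(R)+\mathfrak{a}$.
   Context: $\Gamma_\mathfrak{a}(M)=\{x\in M\mid \exists n\in\mathbb{N}:\mathfrak{a}^n\subseteq(0:_Rx)\}$. A radical is a subfunctor $F$ of the identity functor on $R$-modules with $F(M/F(M))=0$ for every $R$-module $M$. *)

theory Defs
  imports "HOL-Algebra.Module" "HOL-Algebra.Ideal_Product" "HOL-Algebra.AbelCoset"
begin

definition lin_map :: "('r, 'z) ring_scheme \<Rightarrow> ('r, 'm) module \<Rightarrow> ('r, 'n) module \<Rightarrow> ('m \<Rightarrow> 'n) \<Rightarrow> bool" where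
  "lin_map R M N f \<longleftrightarrow>
     (\<forall>x\<in>carrier M. f x \<in> carrier N) \<and>
     (\<forall>x\<in>carrier M. \<forall>y\<in>carrier M. f (x \<oplus>\<^bsub>M\<^esub> y) = f x \<oplus>\<^bsub>N\<^esub> f y) \<and>
     (\<forall>r\<in>carrier R. \<forall>x\<in>carrier M. f (r \<odot>\<^bsub>M\<^esub> x) = r \<odot>\<^bsub>N\<^esub> f x)"

primrec ideal_pow :: "('r, 'z) ring_scheme \<Rightarrow> 'r set \<Rightarrow> nat \<Rightarrow> 'r set" where
  "ideal_pow R I 0 = carrier R"
| "ideal_pow R I (Suc n) = ideal_prod R I (ideal_pow R I n)"

definition annihilator :: "('r, 'z) ring_scheme \<Rightarrow> ('r, 'm) module \<Rightarrow> 'm \<Rightarrow> 'r set" where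
  "annihilator R M x = {r \<in> carrier R. r \<odot>\<^bsub>M\<^esub> x = \<zero>\<^bsub>M\<^esub>}"

definition Gamma :: "('r, 'z) ring_scheme \<Rightarrow> 'r set \<Rightarrow> ('r, 'm) module \<Rightarrow> 'm set" where
  "Gamma R a M = {x \<in> carrier M. \<exists>n::nat. ideal_pow R a n \<subseteq> annihilator R M x}"

definition Gamma_mod :: "('r, 'z) ring_scheme \<Rightarrow> 'r set \<Rightarrow> ('r, 'm) module \<Rightarrow> ('r, 'm) module" where
  "Gamma_mod R a M = M\<lparr>carrier := Gamma R a M\<rparr>"

definition ring_module :: "('r, 'z) ring_scheme \<Rightarrow> ('r, 'r) module" where
  "ring_module R = \<lparr>carrier = carrier R, monoid.mult = monoid.mult R, one = one R,
                    zero = zero R, add = add R, smult = monoid.mult R\<rparr>"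

text \<open>The quotient module M/N (N a submodule of M); elements are the cosets N + x.
  The ring fields mult/one of the record are irrelevant for modules.\<close>
definition quot_module :: "('r, 'm) module \<Rightarrow> 'm set \<Rightarrow> ('r, 'm set) module" where
  "quot_module M N = \<lparr>carrier = a_rcosets\<^bsub>M\<^esub> N, monoid.mult = undefined, one = undefined,
                      zero = N, add = set_add M,
                      smult = (\<lambda>r X. \<Union>x\<in>X. N +>\<^bsub>M\<^esub> (r \<odot>\<^bsub>M\<^esub> x))\<rparr>"

text \<open>A diagram: vertex set V, edge set E with source/target maps, an R-module D v
  for each vertex and an R-linear map f e : D (src e) \<rightarrow> D (tgt e) for each edge.\<close>
definition cocone ::
  "('r, 'z) ring_scheme \<Rightarrow> 'i set \<Rightarrow> 'j set \<Rightarrow> ('j \<Rightarrow> 'i) \<Rightarrow> ('j \<Rightarrow> 'i) \<Rightarrow>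
   ('i \<Rightarrow> ('r, 'm) module) \<Rightarrow> ('j \<Rightarrow> 'm \<Rightarrow> 'm) \<Rightarrow> ('r, 'l) module \<Rightarrow> ('i \<Rightarrow> 'm \<Rightarrow> 'l) \<Rightarrow> bool" where
  "cocone R V E src tgt D f L \<iota> \<longleftrightarrow>
     module R L \<and> (\<forall>v\<in>V. lin_map R (D v) L (\<iota> v)) \<and>
     (\<forall>e\<in>E. \<forall>x\<in>carrier (D (src e)). \<iota> (tgt e) (f e x) = \<iota> (src e) x)"

definition diagram ::
  "('r, 'z) ring_scheme \<Rightarrow> 'i set \<Rightarrow> 'j set \<Rightarrow> ('j \<Rightarrow> 'i) \<Rightarrow> ('j \<Rightarrow> 'i) \<Rightarrow>
   ('i \<Rightarrow> ('r, 'm) module) \<Rightarrow> ('j \<Rightarrow> 'm \<Rightarrow> 'm) \<Rightarrow> bool" where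
  "diagram R V E src tgt D f \<longleftrightarrow>
     (\<forall>v\<in>V. module R (D v)) \<and>
     (\<forall>e\<in>E. src e \<in> V \<and> tgt e \<in> V \<and> lin_map R (D (src e)) (D (tgt e)) (f e))"

text \<open>(L, iota) is a colimit: every cocone (N, kappa) factors uniquely through it.
  Test cocones range over R-modules whose elements have the same HOL type as L.\<close>
definition is_colimit ::
  "('r, 'z) ring_scheme \<Rightarrow> 'i set \<Rightarrow> 'j set \<Rightarrow> ('j \<Rightarrow> 'i) \<Rightarrow> ('j \<Rightarrow> 'i) \<Rightarrow>
   ('i \<Rightarrow> ('r, 'm) module) \<Rightarrow> ('j \<Rightarrow> 'm \<Rightarrow> 'm) \<Rightarrow> ('r, 'l) module \<Rightarrow> ('i \<Rightarrow> 'm \<Rightarrow> 'l) \<Rightarrow> bool" where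
  "is_colimit R V E src tgt D f L \<iota> \<longleftrightarrow>
     diagram R V E src tgt D f \<and> cocone R V E src tgt D f L \<iota> \<and>
     (\<forall>(N :: ('r, 'l) module) \<kappa>. cocone R V E src tgt D f N \<kappa> \<longrightarrow>
        (\<exists>u. lin_map R L N u \<and> (\<forall>v\<in>V. \<forall>x\<in>carrier (D v). u (\<iota> v x) = \<kappa> v x) \<and>
             (\<forall>u'. lin_map R L N u' \<and> (\<forall>v\<in>V. \<forall>x\<in>carrier (D v). u' (\<iota> v x) = \<kappa> v x)
                   \<longrightarrow> (\<forall>y\<in>carrier L. u' y = u y))))"

text \<open>HOL cannot quantify over types inside a formula, so the types of the diagram objects
  ('m) and of the colimit object ('l) are explicit parameters; index sets are sets of
  natural numbers.\<close>
definition Gamma_commutes_colimits ::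
  "('r, 'z) ring_scheme \<Rightarrow> 'r set \<Rightarrow> 'm itself \<Rightarrow> 'l itself \<Rightarrow> bool" where
  "Gamma_commutes_colimits R a (_ :: 'm itself) (_ :: 'l itself) \<longleftrightarrow>
     (\<forall>(V :: nat set) (E :: nat set) src tgt (D :: nat \<Rightarrow> ('r, 'm) module) f
        (L :: ('r, 'l) module) \<iota>.
        is_colimit R V E src tgt D f L \<iota> \<longrightarrow>
        is_colimit R V E src tgt (\<lambda>v. Gamma_mod R a (D v)) f (Gamma_mod R a L) \<iota>)"

end

theory Submission
  imports Defs
begin

(* M/Gamma(M) is the cokernel of the inclusion Gamma(M) -> M, i.e. a colimit of a parallel pair.
   Since Gamma commutes with colimits, Gamma(M/Gamma(M)) is the colimit of the parallel pair
   Gamma(Gamma(M)) => Gamma(M), whose legs all vanish; hence Gamma(M/Gamma(M)) = 0.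
   Likewise R/a = Gamma(R/a) is the colimit of Gamma(a) => Gamma(R). The canonical map
   R/a -> R/(Gamma(R) + a) kills every leg of this colimit, and the legs are jointly epimorphic,
   so that map is zero, i.e. R = Gamma(R) + a. *)

lemma (in ring) ideal_pow_is_ideal:
  assumes "ideal a R"
  shows "ideal (ideal_pow R a n) R"
  by (induction n) (simp_all add: assms oneideal ideal_prod_is_ideal)

lemma (in ring) ideal_pow_antimono:
  assumes "ideal a R" "n \<le> m"
  shows "ideal_pow R a m \<subseteq> ideal_pow R a n"
  using assms(2)
proof (induction m rule: dec_induct)
  case (step m)
  then show ?case
    using ideal_prod_inter[OF assms(1) ideal_pow_is_ideal[OF assms(1)]] by auto
qed simp

lemma (in ring) ideal_pow_1_subset:
  assumes "ideal a R"
  shows "ideal_pow R a 1 \<subseteq> a"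
  using ideal_prod_inter[OF assms oneideal] by simp

lemma (in ring) ideal_pow_subset_carrier:
  assumes "ideal a R"
  shows "ideal_pow R a n \<subseteq> carrier R"
  using ideal.Icarr[OF ideal_pow_is_ideal[OF assms]] by blast

lemma lin_map_id: "lin_map R M M (\<lambda>x. x)"
  unfolding lin_map_def by simp

lemma lin_map_const_zero:
  assumes "module R N"
  shows "lin_map R M N (\<lambda>_. \<zero>\<^bsub>N\<^esub>)"
proof -
  interpret module R N by fact
  show ?thesis unfolding lin_map_def by simp
qed

lemma lin_map_comp:
  assumes "lin_map R M N f" "lin_map R N P g"
  shows "lin_map R M P (\<lambda>x. g (f x))"
  using assms unfolding lin_map_def by simp

lemma lin_map_zero:
  assumes "module R M" "module R N" "lin_map R M N f"
  shows "f \<zero>\<^bsub>M\<^esub> = \<zero>\<^bsub>N\<^esub>"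
proof -
  interpret M: module R M by fact
  interpret N: module R N by fact
  have "\<zero>\<^bsub>R\<^esub> \<in> carrier R" and M0: "\<zero>\<^bsub>M\<^esub> \<in> carrier M" by simp_all
  then have "f (\<zero>\<^bsub>R\<^esub> \<odot>\<^bsub>M\<^esub> \<zero>\<^bsub>M\<^esub>) = \<zero>\<^bsub>R\<^esub> \<odot>\<^bsub>N\<^esub> f \<zero>\<^bsub>M\<^esub>" "f \<zero>\<^bsub>M\<^esub> \<in> carrier N"
    using assms(3) unfolding lin_map_def by blast+
  then show ?thesis using M0 by simp
qed

lemma annihilator_subset_lin_map:
  assumes "module R M" "module R N" "lin_map R M N f" "x \<in> carrier M"
  shows "annihilator R M x \<subseteq> annihilator R N (f x)"
proof
  fix r assume "r \<in> annihilator R M x"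
  then have r: "r \<in> carrier R" "r \<odot>\<^bsub>M\<^esub> x = \<zero>\<^bsub>M\<^esub>"
    unfolding annihilator_def by simp_all
  then have "f (r \<odot>\<^bsub>M\<^esub> x) = r \<odot>\<^bsub>N\<^esub> f x"
    using assms(3,4) unfolding lin_map_def by blast
  then show "r \<in> annihilator R N (f x)"
    using r lin_map_zero[OF assms(1-3)] unfolding annihilator_def by simp
qed

lemma Gamma_subset_carrier: "Gamma R a M \<subseteq> carrier M"
  unfolding Gamma_def by blast

lemma GammaE:
  assumes "x \<in> Gamma R a M"
  obtains n where "x \<in> carrier M" "\<forall>r\<in>ideal_pow R a n. r \<odot>\<^bsub>M\<^esub> x = \<zero>\<^bsub>M\<^esub>"
  using assms unfolding Gamma_def annihilator_def by blast

lemma GammaI: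
  fixes M :: "('r, 'm) module"
  assumes "module R M" "ideal a R" "x \<in> carrier M"
    and "\<forall>r\<in>ideal_pow R a n. r \<odot>\<^bsub>M\<^esub> x = \<zero>\<^bsub>M\<^esub>"
  shows "x \<in> Gamma R a M"
proof -
  interpret module R M by fact
  show ?thesis
    using assms ideal_pow_subset_carrier[OF assms(2), of n]
    unfolding Gamma_def annihilator_def by blast
qed

lemma Gamma_submodule:
  fixes M :: "('r, 'm) module"
  assumes M: "module R M" and a: "ideal a R"
  shows "submodule (Gamma R a M) R M"
proof -
  interpret module R M by fact
  have carr: "r \<in> carrier R" if "r \<in> ideal_pow R a n" for r n
    using that ideal_pow_subset_carrier[OF a] by blast
  show ?thesis
  proof (rule submoduleI)
    show "Gamma R a M \<subseteq> carrier M" by (rule Gamma_subset_carrier)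
    show "\<zero>\<^bsub>M\<^esub> \<in> Gamma R a M"
      using carr by (intro GammaI[OF M a, of _ 0]) simp_all
  next
    fix x assume "x \<in> Gamma R a M"
    then obtain n where x: "x \<in> carrier M" and n: "\<forall>r\<in>ideal_pow R a n. r \<odot>\<^bsub>M\<^esub> x = \<zero>\<^bsub>M\<^esub>"
      by (rule GammaE)
    have "\<forall>r\<in>ideal_pow R a n. r \<odot>\<^bsub>M\<^esub> (\<ominus>\<^bsub>M\<^esub> x) = \<zero>\<^bsub>M\<^esub>"
      using x n carr by (simp add: smult_r_minus)
    then show "\<ominus>\<^bsub>M\<^esub> x \<in> Gamma R a M"
      using x by (intro GammaI[OF M a]) simp_all
  next
    fix x y assume xG: "x \<in> Gamma R a M" and yG: "y \<in> Gamma R a M"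
    obtain n where x: "x \<in> carrier M" and n: "\<forall>r\<in>ideal_pow R a n. r \<odot>\<^bsub>M\<^esub> x = \<zero>\<^bsub>M\<^esub>"
      using xG by (rule GammaE)
    obtain m where y: "y \<in> carrier M" and m: "\<forall>r\<in>ideal_pow R a m. r \<odot>\<^bsub>M\<^esub> y = \<zero>\<^bsub>M\<^esub>"
      using yG by (rule GammaE)
    have "ideal_pow R a (max n m) \<subseteq> ideal_pow R a n \<inter> ideal_pow R a m"
      using ideal_pow_antimono[OF a] by simp
    then have "\<forall>r\<in>ideal_pow R a (max n m). r \<odot>\<^bsub>M\<^esub> (x \<oplus>\<^bsub>M\<^esub> y) = \<zero>\<^bsub>M\<^esub>"
      using x y n m carr by (auto simp: smult_r_distr subset_iff)
    then show "x \<oplus>\<^bsub>M\<^esub> y \<in> Gamma R a M"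
      using x y by (intro GammaI[OF M a]) simp_all
  next
    fix s x assume s: "s \<in> carrier R" and "x \<in> Gamma R a M"
    then obtain n where x: "x \<in> carrier M" and n: "\<forall>r\<in>ideal_pow R a n. r \<odot>\<^bsub>M\<^esub> x = \<zero>\<^bsub>M\<^esub>"
      by (elim GammaE)
    have "r \<odot>\<^bsub>M\<^esub> (s \<odot>\<^bsub>M\<^esub> x) = \<zero>\<^bsub>M\<^esub>" if r: "r \<in> ideal_pow R a n" for r
    proof -
      have "r \<otimes>\<^bsub>R\<^esub> s \<in> ideal_pow R a n"
        using ideal.I_r_closed[OF ideal_pow_is_ideal[OF a] r s] .
      then show ?thesis
        using n s x carr[OF r] by (simp add: smult_assoc1[symmetric])
    qed
    then show "s \<odot>\<^bsub>M\<^esub> x \<in> Gamma R a M"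
      using s x by (intro GammaI[OF M a, of _ n]) simp_all
  qed
qed

lemma lin_map_image_Gamma_subset:
  assumes "module R M" "module R N" "lin_map R M N f"
  shows "f ` Gamma R a M \<subseteq> Gamma R a N"
proof
  fix y assume "y \<in> f ` Gamma R a M"
  then obtain x n where y: "y = f x" and x: "x \<in> carrier M"
    and n: "ideal_pow R a n \<subseteq> annihilator R M x"
    unfolding Gamma_def by blast
  then have "ideal_pow R a n \<subseteq> annihilator R N y"
    using annihilator_subset_lin_map[OF assms x] by blast
  then show "y \<in> Gamma R a N"
    using assms(3) x y unfolding Gamma_def lin_map_def by blast
qed

lemma submodule_abelian_subgroup:
  assumes "module R M" "submodule N R M"
  shows "abelian_subgroup N M"
  using assms by (intro abelian_subgroupI3 additive_subgroup.intro)
    (simp_all add: submodule.axioms(1) module.axioms(2))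

lemma a_rcosetsE:
  assumes "X \<in> a_rcosets\<^bsub>M\<^esub> N"
  obtains x where "x \<in> carrier M" "X = N +>\<^bsub>M\<^esub> x"
  using assms unfolding A_RCOSETS_def' by blast

lemma quot_module_simps:
  "carrier (quot_module M N) = a_rcosets\<^bsub>M\<^esub> N"
  "X \<oplus>\<^bsub>quot_module M N\<^esub> Y = X <+>\<^bsub>M\<^esub> Y"
  "\<zero>\<^bsub>quot_module M N\<^esub> = N"
  by (simp_all add: quot_module_def)

lemma quot_module_smult:
  assumes M: "module R M" and N: "submodule N R M" and r: "r \<in> carrier R" and x: "x \<in> carrier M"
  shows "r \<odot>\<^bsub>quot_module M N\<^esub> (N +>\<^bsub>M\<^esub> x) = N +>\<^bsub>M\<^esub> (r \<odot>\<^bsub>M\<^esub> x)"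
proof -
  interpret module R M by fact
  interpret abelian_subgroup N M by (rule submodule_abelian_subgroup[OF M N])
  have "\<forall>y\<in>N +>\<^bsub>M\<^esub> x. N +>\<^bsub>M\<^esub> (r \<odot>\<^bsub>M\<^esub> y) = N +>\<^bsub>M\<^esub> (r \<odot>\<^bsub>M\<^esub> x)"
  proof
    fix y assume y: "y \<in> N +>\<^bsub>M\<^esub> x"
    have yc: "y \<in> carrier M" using a_elemrcos_carrier[OF x y] .
    have "r \<odot>\<^bsub>M\<^esub> (y \<oplus>\<^bsub>M\<^esub> \<ominus>\<^bsub>M\<^esub> x) \<in> N"
      using submodule.smult_closed[OF N r a_rcos_module_imp[OF x y]] .
    then have "r \<odot>\<^bsub>M\<^esub> y \<oplus>\<^bsub>M\<^esub> \<ominus>\<^bsub>M\<^esub> (r \<odot>\<^bsub>M\<^esub> x) \<in> N"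
      using r x yc by (simp add: smult_r_distr smult_r_minus)
    then have "r \<odot>\<^bsub>M\<^esub> y \<in> N +>\<^bsub>M\<^esub> (r \<odot>\<^bsub>M\<^esub> x)"
      using r x yc by (simp add: a_rcos_module_rev)
    then show "N +>\<^bsub>M\<^esub> (r \<odot>\<^bsub>M\<^esub> y) = N +>\<^bsub>M\<^esub> (r \<odot>\<^bsub>M\<^esub> x)"
      using r x by (simp add: a_repr_independence')
  qed
  then have "(\<Union>y\<in>N +>\<^bsub>M\<^esub> x. N +>\<^bsub>M\<^esub> (r \<odot>\<^bsub>M\<^esub> y)) = N +>\<^bsub>M\<^esub> (r \<odot>\<^bsub>M\<^esub> x)"
    by (rule UN_constant_eq[OF a_rcos_self[OF x]])
  then show ?thesis
    unfolding quot_module_def by simp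
qed

lemma quot_module_abelian_group:
  assumes "abelian_subgroup N M"
  shows "abelian_group (quot_module M N)"
proof -
  interpret abelian_subgroup N M by fact
  show ?thesis
  proof (rule abelian_groupI, unfold quot_module_simps)
    fix X Y assume "X \<in> a_rcosets\<^bsub>M\<^esub> N" "Y \<in> a_rcosets\<^bsub>M\<^esub> N"
    then obtain x y where "x \<in> carrier M" "X = N +>\<^bsub>M\<^esub> x" "y \<in> carrier M" "Y = N +>\<^bsub>M\<^esub> y"
      by (metis a_rcosetsE)
    then show "X <+>\<^bsub>M\<^esub> Y = Y <+>\<^bsub>M\<^esub> X"
      by (simp add: a_rcos_sum a_comm)
    show "\<exists>Y\<in>a_rcosets\<^bsub>M\<^esub> N. Y <+>\<^bsub>M\<^esub> X = N" if "X \<in> a_rcosets\<^bsub>M\<^esub> N" for X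
      using a_setinv_closed[OF that] a_rcosets_inv_mult_group_eq[OF that] by blast
  qed (simp_all add: a_setmult_closed a_subgroup_in_rcosets a_rcosets_assoc rcosets_add_eq)
qed

lemma quot_module_is_module:
  assumes M: "module R M" and N: "submodule N R M"
  shows "module R (quot_module M N)"
proof -
  interpret module R M by fact
  interpret abelian_subgroup N M by (rule submodule_abelian_subgroup[OF M N])
  note smult = quot_module_smult[OF M N]
  have "abelian_group (quot_module M N)"
    by (rule quot_module_abelian_group) unfold_locales
  then show ?thesis
  proof (rule moduleI[OF is_cring], unfold quot_module_simps)
    fix r X assume r: "r \<in> carrier R" and "X \<in> a_rcosets\<^bsub>M\<^esub> N"
    then obtain x where "x \<in> carrier M" "X = N +>\<^bsub>M\<^esub> x" by (metis a_rcosetsE)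
    with r show "r \<odot>\<^bsub>quot_module M N\<^esub> X \<in> a_rcosets\<^bsub>M\<^esub> N"
      by (simp add: smult a_rcosetsI a_subset)
  next
    fix r s X assume r: "r \<in> carrier R" and s: "s \<in> carrier R" and "X \<in> a_rcosets\<^bsub>M\<^esub> N"
    then obtain x where x: "x \<in> carrier M" "X = N +>\<^bsub>M\<^esub> x" by (metis a_rcosetsE)
    with r s show "(r \<oplus>\<^bsub>R\<^esub> s) \<odot>\<^bsub>quot_module M N\<^esub> X
        = r \<odot>\<^bsub>quot_module M N\<^esub> X <+>\<^bsub>M\<^esub> s \<odot>\<^bsub>quot_module M N\<^esub> X"
      by (simp add: smult a_rcos_sum smult_l_distr)
    from x r s show "(r \<otimes>\<^bsub>R\<^esub> s) \<odot>\<^bsub>quot_module M N\<^esub> X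
        = r \<odot>\<^bsub>quot_module M N\<^esub> (s \<odot>\<^bsub>quot_module M N\<^esub> X)"
      by (simp add: smult smult_assoc1)
  next
    fix r X Y assume r: "r \<in> carrier R" and "X \<in> a_rcosets\<^bsub>M\<^esub> N" "Y \<in> a_rcosets\<^bsub>M\<^esub> N"
    then obtain x y where "x \<in> carrier M" "X = N +>\<^bsub>M\<^esub> x" "y \<in> carrier M" "Y = N +>\<^bsub>M\<^esub> y"
      by (metis a_rcosetsE)
    with r show "r \<odot>\<^bsub>quot_module M N\<^esub> (X <+>\<^bsub>M\<^esub> Y)
        = r \<odot>\<^bsub>quot_module M N\<^esub> X <+>\<^bsub>M\<^esub> r \<odot>\<^bsub>quot_module M N\<^esub> Y"
      by (simp add: smult a_rcos_sum smult_r_distr)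
  next
    fix X assume "X \<in> a_rcosets\<^bsub>M\<^esub> N"
    then obtain x where "x \<in> carrier M" "X = N +>\<^bsub>M\<^esub> x" by (metis a_rcosetsE)
    then show "\<one>\<^bsub>R\<^esub> \<odot>\<^bsub>quot_module M N\<^esub> X = X"
      by (simp add: smult)
  qed
qed

lemma lin_map_quot_module_proj:
  assumes M: "module R M" and N: "submodule N R M"
  shows "lin_map R M (quot_module M N) (\<lambda>x. N +>\<^bsub>M\<^esub> x)"
proof -
  interpret module R M by fact
  interpret abelian_subgroup N M by (rule submodule_abelian_subgroup[OF M N])
  show ?thesis
    unfolding lin_map_def quot_module_simps
    by (simp add: quot_module_smult[OF M N] a_rcos_sum a_rcosetsI a_subset)
qed

lemma lin_map_rcos_const:
  assumes M: "module R M" and N: "submodule N R M" and L: "module R L"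
    and k: "lin_map R M L k" and k_N: "\<forall>x\<in>N. k x = \<zero>\<^bsub>L\<^esub>"
    and x: "x \<in> carrier M" and y: "y \<in> N +>\<^bsub>M\<^esub> x"
  shows "k y = k x"
proof -
  interpret module R M by fact
  interpret L: module R L by fact
  interpret abelian_subgroup N M by (rule submodule_abelian_subgroup[OF M N])
  have d: "y \<oplus>\<^bsub>M\<^esub> \<ominus>\<^bsub>M\<^esub> x \<in> N" using a_rcos_module_imp[OF x y] .
  have y_carr: "y \<in> carrier M" using a_elemrcos_carrier[OF x y] .
  have "k y = k ((y \<oplus>\<^bsub>M\<^esub> \<ominus>\<^bsub>M\<^esub> x) \<oplus>\<^bsub>M\<^esub> x)"
    using x y_carr by (simp add: a_assoc l_neg)
  also have "\<dots> = k (y \<oplus>\<^bsub>M\<^esub> \<ominus>\<^bsub>M\<^esub> x) \<oplus>\<^bsub>L\<^esub> k x"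
    using k x y_carr unfolding lin_map_def by simp
  also have "\<dots> = k x"
    using k_N d k x unfolding lin_map_def by simp
  finally show ?thesis .
qed

lemma quot_module_lift:
  assumes M: "module R M" and N: "submodule N R M" and L: "module R L"
    and k: "lin_map R M L k" and k_N: "\<forall>x\<in>N. k x = \<zero>\<^bsub>L\<^esub>"
  obtains u where "lin_map R (quot_module M N) L u" "\<forall>x\<in>carrier M. u (N +>\<^bsub>M\<^esub> x) = k x"
proof -
  interpret module R M by fact
  interpret L: module R L by fact
  interpret abelian_subgroup N M by (rule submodule_abelian_subgroup[OF M N])
  have k_closed: "k x \<in> carrier L" if "x \<in> carrier M" for x
    using k that unfolding lin_map_def by blast
  have k_add: "k (x \<oplus>\<^bsub>M\<^esub> y) = k x \<oplus>\<^bsub>L\<^esub> k y" if "x \<in> carrier M" "y \<in> carrier M" for x y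
    using k that unfolding lin_map_def by blast
  have k_smult: "k (r \<odot>\<^bsub>M\<^esub> x) = r \<odot>\<^bsub>L\<^esub> k x" if "r \<in> carrier R" "x \<in> carrier M" for r x
    using k that unfolding lin_map_def by blast
  define u where "u X = k (SOME x. x \<in> X)" for X
  have u_coset: "u (N +>\<^bsub>M\<^esub> x) = k x" if x: "x \<in> carrier M" for x
    using lin_map_rcos_const[OF M N L k k_N x] a_rcos_self[OF x] unfolding u_def by (metis someI)
  have "lin_map R (quot_module M N) L u"
    unfolding lin_map_def quot_module_simps
  proof (intro conjI ballI)
    fix X assume "X \<in> a_rcosets\<^bsub>M\<^esub> N"
    then obtain x where "x \<in> carrier M" "X = N +>\<^bsub>M\<^esub> x" by (rule a_rcosetsE)
    then show "u X \<in> carrier L" by (simp add: u_coset k_closed)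
  next
    fix X Y assume "X \<in> a_rcosets\<^bsub>M\<^esub> N" "Y \<in> a_rcosets\<^bsub>M\<^esub> N"
    then obtain x y where "x \<in> carrier M" "X = N +>\<^bsub>M\<^esub> x" "y \<in> carrier M" "Y = N +>\<^bsub>M\<^esub> y"
      by (metis a_rcosetsE)
    then show "u (X <+>\<^bsub>M\<^esub> Y) = u X \<oplus>\<^bsub>L\<^esub> u Y" by (simp add: a_rcos_sum u_coset k_add)
  next
    fix r X assume r: "r \<in> carrier R" and "X \<in> a_rcosets\<^bsub>M\<^esub> N"
    then obtain x where "x \<in> carrier M" "X = N +>\<^bsub>M\<^esub> x" by (metis a_rcosetsE)
    with r show "u (r \<odot>\<^bsub>quot_module M N\<^esub> X) = r \<odot>\<^bsub>L\<^esub> u X"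
      by (simp add: quot_module_smult[OF M N] u_coset k_smult)
  qed
  then show ?thesis by (rule that) (simp add: u_coset)
qed

lemma quot_module_canonical_map:
  assumes M: "module R M" and N: "submodule N R M" and N': "submodule N' R M" and "N \<subseteq> N'"
  obtains u where "lin_map R (quot_module M N) (quot_module M N') u"
    "\<forall>x\<in>carrier M. u (N +>\<^bsub>M\<^esub> x) = N' +>\<^bsub>M\<^esub> x"
proof -
  interpret abelian_subgroup N' M by (rule submodule_abelian_subgroup[OF M N'])
  have "\<forall>x\<in>N. N' +>\<^bsub>M\<^esub> x = \<zero>\<^bsub>quot_module M N'\<^esub>"
    using \<open>N \<subseteq> N'\<close> a_rcos_const unfolding quot_module_simps by blast
  then obtain u where "lin_map R (quot_module M N) (quot_module M N') u"
    "\<forall>x\<in>carrier M. u (N +>\<^bsub>M\<^esub> x) = N' +>\<^bsub>M\<^esub> x"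
    by (rule quot_module_lift[OF M N quot_module_is_module[OF M N'] lin_map_quot_module_proj[OF M N']])
  then show ?thesis by (rule that)
qed

lemma quot_module_canonical_map_zero:
  assumes M: "module R M" and N: "submodule N R M" and N': "submodule N' R M"
    and u_coset: "\<forall>x\<in>carrier M. u (N +>\<^bsub>M\<^esub> x) = N' +>\<^bsub>M\<^esub> x"
    and u_zero: "\<forall>Y\<in>carrier (quot_module M N). u Y = \<zero>\<^bsub>quot_module M N'\<^esub>"
  shows "N' = carrier M"
proof -
  interpret N: abelian_subgroup N M by (rule submodule_abelian_subgroup[OF M N])
  interpret N': abelian_subgroup N' M by (rule submodule_abelian_subgroup[OF M N'])
  have "x \<in> N'" if x: "x \<in> carrier M" for x
  proof -
    have "N +>\<^bsub>M\<^esub> x \<in> carrier (quot_module M N)"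
      using x N.a_rcosetsI[OF N.a_subset] by (simp add: quot_module_simps)
    then have "u (N +>\<^bsub>M\<^esub> x) = N'"
      using u_zero unfolding quot_module_simps by blast
    moreover have "u (N +>\<^bsub>M\<^esub> x) = N' +>\<^bsub>M\<^esub> x"
      using u_coset x by blast
    ultimately show "x \<in> N'" using N'.a_rcos_self[OF x] by simp
  qed
  with N'.a_subset show ?thesis by blast
qed

lemma submodule_set_add:
  assumes M: "module R M" and H: "submodule H R M" and K: "submodule K R M"
  shows "submodule (H <+>\<^bsub>M\<^esub> K) R M"
proof -
  interpret module R M by fact
  have "additive_subgroup (H <+>\<^bsub>M\<^esub> K) M"
    using H K by (intro add_additive_subgroups additive_subgroup.intro submodule.axioms(1))
  moreover have "r \<odot>\<^bsub>M\<^esub> z \<in> H <+>\<^bsub>M\<^esub> K" if r: "r \<in> carrier R" and z: "z \<in> H <+>\<^bsub>M\<^esub> K" for r z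
  proof -
    obtain h k where hk: "h \<in> H" "k \<in> K" "z = h \<oplus>\<^bsub>M\<^esub> k"
      using z unfolding set_add_def' by blast
    have "h \<in> carrier M" "k \<in> carrier M"
      using hk H K submoduleE(1) by blast+
    then have "r \<odot>\<^bsub>M\<^esub> z = r \<odot>\<^bsub>M\<^esub> h \<oplus>\<^bsub>M\<^esub> r \<odot>\<^bsub>M\<^esub> k"
      using r hk by (simp add: smult_r_distr)
    moreover have "r \<odot>\<^bsub>M\<^esub> h \<in> H" "r \<odot>\<^bsub>M\<^esub> k \<in> K"
      using r hk H K by (simp_all add: submodule.smult_closed)
    ultimately show ?thesis
      unfolding set_add_def' by blast
  qed
  ultimately show ?thesis
    by (intro submodule.intro submodule_axioms.intro additive_subgroup.a_subgroup)
qed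

lemma submodule_subset_set_add:
  assumes M: "module R M" and H: "submodule H R M" and K: "submodule K R M"
  shows "H \<subseteq> H <+>\<^bsub>M\<^esub> K" "K \<subseteq> H <+>\<^bsub>M\<^esub> K"
proof -
  interpret module R M by fact
  have "\<zero>\<^bsub>M\<^esub> \<in> H" "\<zero>\<^bsub>M\<^esub> \<in> K"
    using H K subgroup.one_closed submodule.axioms(1) by fastforce+
  moreover have "H \<subseteq> carrier M" "K \<subseteq> carrier M"
    using H K submoduleE(1) by blast+
  ultimately show "H \<subseteq> H <+>\<^bsub>M\<^esub> K" "K \<subseteq> H <+>\<^bsub>M\<^esub> K"
    unfolding set_add_def' by force+
qed

lemma is_colimit_lin_map_ext:
  fixes L N :: "('r, 'l) module"
  assumes colim: "is_colimit R V E src tgt D f L \<iota>" and N: "module R N"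
    and u: "lin_map R L N u" and u': "lin_map R L N u'"
    and legs: "\<forall>v\<in>V. \<forall>x\<in>carrier (D v). u (\<iota> v x) = u' (\<iota> v x)"
  shows "\<forall>y\<in>carrier L. u y = u' y"
proof -
  have L: "cocone R V E src tgt D f L \<iota>"
    using colim unfolding is_colimit_def by (elim conjE)
  have "cocone R V E src tgt D f N (\<lambda>v x. u (\<iota> v x))"
    unfolding cocone_def
  proof (intro conjI ballI)
    fix v assume "v \<in> V"
    then show "lin_map R (D v) N (\<lambda>x. u (\<iota> v x))"
      using L lin_map_comp[OF _ u] unfolding cocone_def by blast
  next
    fix e x assume "e \<in> E" "x \<in> carrier (D (src e))"
    then show "u (\<iota> (tgt e) (f e x)) = u (\<iota> (src e) x)"
      using L unfolding cocone_def by simp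
  qed (rule N)
  then obtain w where "\<forall>u''. lin_map R L N u'' \<and>
      (\<forall>v\<in>V. \<forall>x\<in>carrier (D v). u'' (\<iota> v x) = u (\<iota> v x)) \<longrightarrow> (\<forall>y\<in>carrier L. u'' y = w y)"
    using colim[unfolded is_colimit_def, THEN conjunct2, THEN conjunct2, rule_format] by blast
  note w = this[rule_format, OF conjI]
  show ?thesis
    using w[OF u] w[OF u'] legs by simp
qed

lemma is_colimit_trivial:
  assumes colim: "is_colimit R V E src tgt D f L \<iota>"
    and legs: "\<forall>v\<in>V. \<forall>x\<in>carrier (D v). \<iota> v x = \<zero>\<^bsub>L\<^esub>"
  shows "carrier L = {\<zero>\<^bsub>L\<^esub>}"
proof -
  have L: "module R L"
    using colim unfolding is_colimit_def cocone_def by blast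
  have "\<forall>y\<in>carrier L. y = \<zero>\<^bsub>L\<^esub>"
    using is_colimit_lin_map_ext[OF colim L lin_map_id lin_map_const_zero[OF L]] legs by simp
  moreover interpret module R L by fact
  have "\<zero>\<^bsub>L\<^esub> \<in> carrier L" by simp
  ultimately show ?thesis by blast
qed

text \<open>The cokernel \<open>M/N\<close> as the colimit of the parallel pair formed by the inclusion
  \<open>N \<rightarrow> M\<close> (edge 0) and the zero map (edge 1).\<close>
definition coker_obj :: "('r, 'm) module \<Rightarrow> 'm set \<Rightarrow> nat \<Rightarrow> ('r, 'm) module" where
  "coker_obj M N v = (if v = 0 then M\<lparr>carrier := N\<rparr> else M)"

definition coker_arr :: "('r, 'm) module \<Rightarrow> nat \<Rightarrow> 'm \<Rightarrow> 'm" where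
  "coker_arr M e = (if e = 0 then (\<lambda>x. x) else (\<lambda>_. \<zero>\<^bsub>M\<^esub>))"

definition coker_leg :: "('r, 'm) module \<Rightarrow> 'm set \<Rightarrow> nat \<Rightarrow> 'm \<Rightarrow> 'm set" where
  "coker_leg M N v = (if v = 0 then (\<lambda>_. N) else (\<lambda>x. N +>\<^bsub>M\<^esub> x))"

lemma coker_obj_simps:
  "coker_obj M N 0 = M\<lparr>carrier := N\<rparr>" "coker_obj M N 1 = M"
  by (simp_all add: coker_obj_def)

lemma coker_leg_simps:
  "coker_leg M N 0 = (\<lambda>_. N)" "coker_leg M N 1 = (\<lambda>x. N +>\<^bsub>M\<^esub> x)"
  by (simp_all add: coker_leg_def)

lemma coker_cocone_D:
  assumes M: "module R M"
    and "cocone R {0, 1} {0, 1} (\<lambda>_. 0) (\<lambda>_. 1) (coker_obj M N) (coker_arr M) L \<kappa>"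
  shows "module R L" "lin_map R M L (\<kappa> 1)" "\<forall>x\<in>N. \<kappa> 1 x = \<zero>\<^bsub>L\<^esub>" "\<forall>x\<in>N. \<kappa> 0 x = \<zero>\<^bsub>L\<^esub>"
proof -
  have L: "module R L" and lin: "\<forall>v\<in>{0, 1}. lin_map R (coker_obj M N v) L (\<kappa> v)"
    and compat: "\<forall>e\<in>{0, 1}. \<forall>x\<in>carrier (coker_obj M N 0). \<kappa> 1 (coker_arr M e x) = \<kappa> 0 x"
    using assms(2) unfolding cocone_def by blast+
  have k: "lin_map R M L (\<kappa> 1)"
    using lin by (simp add: coker_obj_def)
  have k_N: "\<kappa> 1 x = \<kappa> 0 x" and k_0: "\<kappa> 1 \<zero>\<^bsub>M\<^esub> = \<kappa> 0 x" if "x \<in> N" for x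
    using compat[rule_format, of 0 x] compat[rule_format, of 1 x] that
    unfolding coker_obj_def coker_arr_def by simp_all
  have "\<kappa> 0 x = \<zero>\<^bsub>L\<^esub>" if "x \<in> N" for x
    using k_0[OF that] lin_map_zero[OF M L k] by simp
  with k_N show "module R L" "lin_map R M L (\<kappa> 1)" "\<forall>x\<in>N. \<kappa> 1 x = \<zero>\<^bsub>L\<^esub>" "\<forall>x\<in>N. \<kappa> 0 x = \<zero>\<^bsub>L\<^esub>"
    using L k by simp_all
qed

lemma quot_module_is_colimit:
  assumes M: "module R M" and N: "submodule N R M"
  shows "is_colimit R {0, 1} {0, 1} (\<lambda>_. 0) (\<lambda>_. 1) (coker_obj M N) (coker_arr M)
           (quot_module M N) (coker_leg M N)"
proof -
  interpret module R M by fact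
  interpret abelian_subgroup N M by (rule submodule_abelian_subgroup[OF M N])
  have Q: "module R (quot_module M N)" by (rule quot_module_is_module[OF M N])
  have incl: "lin_map R (M\<lparr>carrier := N\<rparr>) M (\<lambda>x. x)"
    unfolding lin_map_def using a_subset by auto
  have "diagram R {0, 1} {0, 1} (\<lambda>_. 0) (\<lambda>_. 1) (coker_obj M N) (coker_arr M)"
    unfolding diagram_def coker_obj_def coker_arr_def
    using submodule.submodule_is_module[OF N M] M incl lin_map_const_zero[OF M] by simp
  moreover have "cocone R {0, 1} {0, 1} (\<lambda>_. 0) (\<lambda>_. 1) (coker_obj M N) (coker_arr M)
                   (quot_module M N) (coker_leg M N)"
    unfolding cocone_def coker_obj_def coker_arr_def coker_leg_def
    using Q lin_map_quot_module_proj[OF M N] lin_map_const_zero[OF Q]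
    by (simp add: quot_module_simps a_rcos_const)
  moreover have "\<exists>u. lin_map R (quot_module M N) L u \<and>
      (\<forall>v\<in>{0, 1}. \<forall>x\<in>carrier (coker_obj M N v). u (coker_leg M N v x) = \<kappa> v x) \<and>
      (\<forall>u'. lin_map R (quot_module M N) L u' \<and>
         (\<forall>v\<in>{0, 1}. \<forall>x\<in>carrier (coker_obj M N v). u' (coker_leg M N v x) = \<kappa> v x) \<longrightarrow>
         (\<forall>Y\<in>carrier (quot_module M N). u' Y = u Y))"
    if "cocone R {0, 1} {0, 1} (\<lambda>_. 0) (\<lambda>_. 1) (coker_obj M N) (coker_arr M) L \<kappa>" for L \<kappa>
  proof -
    note \<kappa> = coker_cocone_D[OF M that]
    obtain u where u: "lin_map R (quot_module M N) L u"
      and u_coset: "\<forall>x\<in>carrier M. u (N +>\<^bsub>M\<^esub> x) = \<kappa> 1 x"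
      using \<kappa>(3) by (rule quot_module_lift[OF M N \<kappa>(1,2)])
    have "u N = \<zero>\<^bsub>L\<^esub>"
      using lin_map_zero[OF Q \<kappa>(1) u] by (simp add: quot_module_simps)
    with \<kappa>(4) have legs: "\<forall>v\<in>{0, 1}. \<forall>x\<in>carrier (coker_obj M N v). u (coker_leg M N v x) = \<kappa> v x"
      using u_coset unfolding coker_obj_def coker_leg_def by simp
    have "\<forall>Y\<in>carrier (quot_module M N). u' Y = u Y"
      if u'_legs: "\<forall>v\<in>{0, 1}. \<forall>x\<in>carrier (coker_obj M N v). u' (coker_leg M N v x) = \<kappa> v x" for u'
    proof
      fix Y assume "Y \<in> carrier (quot_module M N)"
      then obtain y where y: "y \<in> carrier M" "Y = N +>\<^bsub>M\<^esub> y"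
        unfolding quot_module_simps by (rule a_rcosetsE)
      then have "u' Y = \<kappa> 1 y"
        using u'_legs unfolding coker_obj_def coker_leg_def by simp
      with y u_coset show "u' Y = u Y" by simp
    qed
    with u legs show ?thesis by blast
  qed
  ultimately show ?thesis
    unfolding is_colimit_def by blast
qed

lemma ring_module_simps:
  "carrier (ring_module R) = carrier R"
  "add (ring_module R) = add R"
  "zero (ring_module R) = zero R"
  "smult (ring_module R) = monoid.mult R"
  by (simp_all add: ring_module_def)

lemma set_add_ring_module: "set_add (ring_module R) A B = set_add R A B"
  by (simp add: set_add_def' ring_module_simps)

lemma ring_module_is_module:
  assumes "cring R"
  shows "module R (ring_module R)"
proof -
  interpret cring R by fact
  show ?thesis
  proof (rule moduleI)
    show "abelian_group (ring_module R)"
      by (rule abelian_groupI) (auto simp: ring_module_simps a_ac intro: l_neg)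
  qed (auto simp: ring_module_simps l_distr r_distr m_assoc is_cring)
qed

lemma ideal_is_submodule:
  assumes "cring R" "ideal a R"
  shows "submodule a R (ring_module R)"
proof -
  interpret cring R by fact
  interpret ideal a R by fact
  interpret module R "ring_module R" by (rule ring_module_is_module) fact
  have "a_inv (ring_module R) x = a_inv R x" for x
    by (simp add: a_inv_def m_inv_def ring_module_simps)
  then show ?thesis
    by (intro submoduleI) (auto simp: ring_module_simps a_subset I_l_closed)
qed

lemma Gamma_quot_module_ideal:
  assumes R: "cring R" and a: "ideal a R"
  shows "Gamma R a (quot_module (ring_module R) a) = carrier (quot_module (ring_module R) a)"
proof
  interpret cring R by fact
  interpret RM: module R "ring_module R" by (rule ring_module_is_module) fact
  have a_sub: "submodule a R (ring_module R)" by (rule ideal_is_submodule[OF R a])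
  interpret A: abelian_subgroup a "ring_module R"
    by (rule submodule_abelian_subgroup[OF RM.module_axioms a_sub])
  have Q: "module R (quot_module (ring_module R) a)"
    by (rule quot_module_is_module[OF RM.module_axioms a_sub])
  show "carrier (quot_module (ring_module R) a) \<subseteq> Gamma R a (quot_module (ring_module R) a)"
  proof
    fix X assume X_in: "X \<in> carrier (quot_module (ring_module R) a)"
    then obtain x where x: "x \<in> carrier R" and X: "X = a +>\<^bsub>ring_module R\<^esub> x"
      unfolding quot_module_simps by (auto elim: a_rcosetsE simp: ring_module_simps)
    have "r \<odot>\<^bsub>quot_module (ring_module R) a\<^esub> X = a" if "r \<in> ideal_pow R a 1" for r
    proof -
      have r: "r \<in> a" using that ideal_pow_1_subset[OF a] by blast
      then have "r \<otimes>\<^bsub>R\<^esub> x \<in> a" using x by (simp add: ideal.I_r_closed[OF a])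
      then show ?thesis
        using r x X quot_module_smult[OF RM.module_axioms a_sub] A.a_rcos_const
        by (simp add: ring_module_simps ideal.Icarr[OF a])
    qed
    then show "X \<in> Gamma R a (quot_module (ring_module R) a)"
      by (intro GammaI[OF Q a X_in, of 1]) (simp add: quot_module_simps)
  qed
qed (rule Gamma_subset_carrier)

lemma Gamma_mod_simps:
  "carrier (Gamma_mod R a M) = Gamma R a M"
  "\<zero>\<^bsub>Gamma_mod R a M\<^esub> = \<zero>\<^bsub>M\<^esub>"
  by (simp_all add: Gamma_mod_def)

lemma coker_Gamma_legs_vanish:
  assumes M: "module R M" and N: "submodule N R M" and L: "module R L"
    and u: "lin_map R (quot_module M N) L u"
    and u_Gamma: "\<forall>x\<in>Gamma R a M. u (N +>\<^bsub>M\<^esub> x) = \<zero>\<^bsub>L\<^esub>"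
  shows "\<forall>v\<in>{0, 1}. \<forall>x\<in>carrier (Gamma_mod R a (coker_obj M N v)). u (coker_leg M N v x) = \<zero>\<^bsub>L\<^esub>"
proof (intro ballI)
  fix v x assume "v \<in> {0, 1}" and x: "x \<in> carrier (Gamma_mod R a (coker_obj M N v))"
  then consider "v = 0" | "v = 1" by blast
  then show "u (coker_leg M N v x) = \<zero>\<^bsub>L\<^esub>"
  proof cases
    case 1
    have "u N = \<zero>\<^bsub>L\<^esub>"
      using lin_map_zero[OF quot_module_is_module[OF M N] L u] by (simp add: quot_module_simps)
    with 1 show ?thesis by (simp only: coker_leg_simps)
  next
    case 2
    then have "x \<in> Gamma R a M" using x by (simp only: coker_obj_simps Gamma_mod_simps)
    with 2 u_Gamma show ?thesis by (simp only: coker_leg_simps)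
  qed
qed

lemma Gamma_quot_module_Gamma:
  fixes M :: "('r, 'm) module"
  assumes commutes: "Gamma_commutes_colimits R a TYPE('m) TYPE('m set)"
    and M: "module R M" and a: "ideal a R"
  shows "Gamma R a (quot_module M (Gamma R a M)) = {\<zero>\<^bsub>quot_module M (Gamma R a M)\<^esub>}"
proof -
  let ?G = "Gamma R a M"
  have G: "submodule ?G R M" by (rule Gamma_submodule[OF M a])
  interpret abelian_subgroup ?G M by (rule submodule_abelian_subgroup[OF M G])
  have "is_colimit R {0, 1} {0, 1} (\<lambda>_. 0) (\<lambda>_. 1) (\<lambda>v. Gamma_mod R a (coker_obj M ?G v))
          (coker_arr M) (Gamma_mod R a (quot_module M ?G)) (coker_leg M ?G)"
    using quot_module_is_colimit[OF M G]
    by (rule commutes[unfolded Gamma_commutes_colimits_def, rule_format])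
  moreover have "\<forall>v\<in>{0, 1}. \<forall>x\<in>carrier (Gamma_mod R a (coker_obj M ?G v)).
      coker_leg M ?G v x = \<zero>\<^bsub>Gamma_mod R a (quot_module M ?G)\<^esub>"
    using Gamma_subset_carrier[of R a "M\<lparr>carrier := ?G\<rparr>"]
    by (auto simp: Gamma_mod_simps quot_module_simps coker_obj_def coker_leg_def a_rcos_const)
  ultimately show ?thesis
    using is_colimit_trivial by (fastforce simp: Gamma_mod_simps)
qed

lemma quot_module_ideal_is_Gamma_colimit:
  fixes R :: "('r, 'z) ring_scheme"
  assumes commutes: "Gamma_commutes_colimits R a TYPE('r) TYPE('r set)"
    and R: "cring R" and a: "ideal a R"
  shows "is_colimit R {0, 1} {0, 1} (\<lambda>_. 0) (\<lambda>_. 1)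
           (\<lambda>v. Gamma_mod R a (coker_obj (ring_module R) a v)) (coker_arr (ring_module R))
           (quot_module (ring_module R) a) (coker_leg (ring_module R) a)"
proof -
  have "Gamma_mod R a (quot_module (ring_module R) a) = quot_module (ring_module R) a"
    by (simp add: Gamma_mod_def Gamma_quot_module_ideal[OF R a])
  then show ?thesis
    using commutes[unfolded Gamma_commutes_colimits_def, rule_format,
        OF quot_module_is_colimit[OF ring_module_is_module[OF R] ideal_is_submodule[OF R a]]]
    by simp
qed

lemma carrier_eq_Gamma_set_add_ideal:
  fixes R :: "('r, 'z) ring_scheme"
  assumes commutes: "Gamma_commutes_colimits R a TYPE('r) TYPE('r set)"
    and R: "cring R" and a: "ideal a R"
  shows "carrier R = Gamma R a (ring_module R) <+>\<^bsub>R\<^esub> a"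
proof -
  let ?RM = "ring_module R" and ?G = "Gamma R a (ring_module R)"
  let ?S = "?G <+>\<^bsub>?RM\<^esub> a" and ?Q = "quot_module ?RM a"
  have RM: "module R ?RM" by (rule ring_module_is_module[OF R])
  have a_sub: "submodule a R ?RM" by (rule ideal_is_submodule[OF R a])
  have G_sub: "submodule ?G R ?RM" by (rule Gamma_submodule[OF RM a])
  have S_sub: "submodule ?S R ?RM" by (rule submodule_set_add[OF RM G_sub a_sub])
  interpret S: abelian_subgroup ?S ?RM by (rule submodule_abelian_subgroup[OF RM S_sub])
  define T where "T = quot_module ?RM ?S"
  have T: "module R T" unfolding T_def by (rule quot_module_is_module[OF RM S_sub])
  obtain u where u: "lin_map R ?Q T u"
    and u_coset: "\<forall>x\<in>carrier ?RM. u (a +>\<^bsub>?RM\<^esub> x) = ?S +>\<^bsub>?RM\<^esub> x"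
    using quot_module_canonical_map[OF RM a_sub S_sub submodule_subset_set_add(2)[OF RM G_sub a_sub]]
    unfolding T_def by blast
  have "\<forall>x\<in>?G. u (a +>\<^bsub>?RM\<^esub> x) = \<zero>\<^bsub>T\<^esub>"
  proof
    fix x assume x: "x \<in> ?G"
    then have "u (a +>\<^bsub>?RM\<^esub> x) = ?S +>\<^bsub>?RM\<^esub> x"
      using u_coset module.submoduleE(1)[OF RM G_sub] by blast
    also have "\<dots> = ?S"
      using submodule_subset_set_add(1)[OF RM G_sub a_sub] x by (intro S.a_rcos_const) blast
    finally show "u (a +>\<^bsub>?RM\<^esub> x) = \<zero>\<^bsub>T\<^esub>" by (simp add: T_def quot_module_simps)
  qed
  then have "\<forall>v\<in>{0, 1}. \<forall>x\<in>carrier (Gamma_mod R a (coker_obj ?RM a v)).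
      u (coker_leg ?RM a v x) = \<zero>\<^bsub>T\<^esub>"
    by (rule coker_Gamma_legs_vanish[OF RM a_sub T u])
  then have "\<forall>Y\<in>carrier ?Q. u Y = \<zero>\<^bsub>T\<^esub>"
    by (rule is_colimit_lin_map_ext[OF quot_module_ideal_is_Gamma_colimit[OF commutes R a]
          T u lin_map_const_zero[OF T]])
  then have "?S = carrier ?RM"
    using quot_module_canonical_map_zero[OF RM a_sub S_sub u_coset] unfolding T_def by blast
  then show ?thesis
    by (simp add: ring_module_simps set_add_ring_module)
qed

theorem proposition9p7:
  fixes R :: "'r ring" and a :: "'r set"
  assumes "cring R" and "ideal a R"
    and "Gamma_commutes_colimits R a TYPE('m) TYPE('m set)"
    and "Gamma_commutes_colimits R a TYPE('r) TYPE('r set)"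
  shows "(\<forall>M :: ('r, 'm) module. module R M \<longrightarrow>
            submodule (Gamma R a M) R M \<and>
            (\<forall>(N :: ('r, 'n) module) f. module R N \<and> lin_map R M N f \<longrightarrow>
                 f ` Gamma R a M \<subseteq> Gamma R a N) \<and>
            Gamma R a (quot_module M (Gamma R a M)) = {\<zero>\<^bsub>quot_module M (Gamma R a M)\<^esub>})
         \<and> carrier R = Gamma R a (ring_module R) <+>\<^bsub>R\<^esub> a"
proof (intro conjI allI impI)
  fix M :: "('r, 'm) module" assume M: "module R M"
  show "submodule (Gamma R a M) R M"
    by (rule Gamma_submodule[OF M assms(2)])
  show "f ` Gamma R a M \<subseteq> Gamma R a N"
    if "module R N \<and> lin_map R M N f" for N :: "('r, 'n) module" and f
    using lin_map_image_Gamma_subset[OF M] that by blast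
  show "Gamma R a (quot_module M (Gamma R a M)) = {\<zero>\<^bsub>quot_module M (Gamma R a M)\<^esub>}"
    by (rule Gamma_quot_module_Gamma[OF assms(3) M assms(2)])
next
  show "carrier R = Gamma R a (ring_module R) <+>\<^bsub>R\<^esub> a"
    by (rule carrier_eq_Gamma_set_add_ideal[OF assms(4,1,2)])
qed

end
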